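(* For all $0\le\varepsilon\le x\le1$ with $x>0$, $\Delta(\varepsilon)\le \frac{\Delta(x)}{x}\,\varepsilon$. In particular $\Delta(\varepsilon)\le\varepsilon$ for all $0\le\varepsilon\le1$.
   Context: Let $\lambda$ denote Lebesgue measure on $\mathbb{R}$. A set $C\subseteq\mathbb{R}$ is symmetric if there is a number $c$ such that $c+x\in C$ if and only if $c-x\in C$. For a measurable $A\subseteq\mathbb{R}$ let $D(A):=\sup\{\lambda(C): C\subseteq A,\ C \text{ measurable and symmetric}\}$. For $0\le\varepsilon\le1$ let $\Delta(\varepsilon):=\inf\{D(A): A\subseteq[0,1) \text{ measurable},\ \lambda(A)=\varepsilon\}$. *)

theory Defs
  imports "HOL-Analysis.Analysis"
begin

definition symmetric_set :: "real set \<Rightarrow> bool" where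
  "symmetric_set C \<longleftrightarrow> (\<exists>c. \<forall>x. c + x \<in> C \<longleftrightarrow> c - x \<in> C)"

text \<open>D(A): supremum of Lebesgue measures of measurable symmetric subsets of A.
  (Used only for A a subset of [0,1), where this set of reals is bounded and nonempty.)\<close>
definition D :: "real set \<Rightarrow> real" where
  "D A = Sup {measure lebesgue C | C. C \<subseteq> A \<and> C \<in> sets lebesgue \<and> symmetric_set C}"

definition Delta :: "real \<Rightarrow> real" where
  "Delta \<epsilon> = Inf {D A | A. A \<subseteq> {0..<1} \<and> A \<in> sets lebesgue \<and> measure lebesgue A = \<epsilon>}"

end

theory Submission
  imports Defs
begin

text \<open>Shrinking a set by the factor \<open>t = \<epsilon>/x \<le> 1\<close> keeps it inside \<open>[0,1)\<close>, multiplies its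
  measure by \<open>t\<close> and maps symmetric subsets to symmetric subsets and back; hence
  \<open>D(tA) \<le> t D(A)\<close>, and taking the infimum over all \<open>A\<close> of measure \<open>x\<close> gives
  \<open>\<Delta>(\<epsilon>) \<le> t \<Delta>(x)\<close>. The bound \<open>\<Delta>(\<epsilon>) \<le> \<epsilon>\<close> is the case \<open>x = 1\<close>, since \<open>\<Delta>(1) \<le> D([0,1)) \<le> 1\<close>.\<close>

lemma scaleR_image_eq_vimage:
  fixes S :: "'a::real_vector set"
  assumes "t \<noteq> 0"
  shows "(*\<^sub>R) t ` S = (*\<^sub>R) (1 / t) -` S"
proof (intro equalityI subsetI)
  fix x assume "x \<in> (*\<^sub>R) (1 / t) -` S"
  then have "(1 / t) *\<^sub>R x \<in> S" by simp
  moreover have "x = t *\<^sub>R ((1 / t) *\<^sub>R x)" using assms by simp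
  ultimately show "x \<in> (*\<^sub>R) t ` S" by blast
qed (use assms in auto)

lemma sets_lebesgue_scaleR_image:
  fixes S :: "'a::euclidean_space set"
  assumes "t \<noteq> 0" "S \<in> sets lebesgue"
  shows "(*\<^sub>R) t ` S \<in> sets lebesgue"
  using measurable_sets[OF lebesgue_measurable_scaling[of "1 / t"] assms(2)]
  by (simp add: scaleR_image_eq_vimage[OF assms(1)])

lemma measure_lebesgue_scaleR_image:
  fixes S :: "'a::euclidean_space set"
  shows "measure lebesgue ((*\<^sub>R) t ` S) = \<bar>t\<bar> ^ DIM('a) * measure lebesgue S"
  using measure_lebesgue_affine[of t 0 S] by simp

lemma symmetric_set_empty: "symmetric_set {}"
  unfolding symmetric_set_def by simp

lemma symmetric_set_scale_image:
  fixes s :: real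
  assumes "s \<noteq> 0" "symmetric_set C"
  shows "symmetric_set ((*) s ` C)"
proof -
  obtain c where c: "\<And>x. c + x \<in> C \<longleftrightarrow> c - x \<in> C"
    using assms(2) unfolding symmetric_set_def by blast
  have mem: "z \<in> (*) s ` C \<longleftrightarrow> z / s \<in> C" for z
    using scaleR_image_eq_vimage[OF assms(1), of C] by (auto simp: divide_inverse mult.commute)
  have "s * c + x \<in> (*) s ` C \<longleftrightarrow> s * c - x \<in> (*) s ` C" for x
    using c[of "x / s"] assms(1) by (simp add: mem add_divide_distrib diff_divide_distrib)
  then show ?thesis unfolding symmetric_set_def by blast
qed

lemma D_leI:
  assumes "\<And>C. C \<subseteq> A \<Longrightarrow> C \<in> sets lebesgue \<Longrightarrow> symmetric_set C \<Longrightarrow> measure lebesgue C \<le> b"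
  shows "D A \<le> b"
  unfolding D_def using assms symmetric_set_empty by (intro cSup_least) auto

lemma D_ge_measure:
  assumes "A \<in> fmeasurable lebesgue" "C \<subseteq> A" "C \<in> sets lebesgue" "symmetric_set C"
  shows "measure lebesgue C \<le> D A"
proof -
  have "bdd_above {measure lebesgue C | C. C \<subseteq> A \<and> C \<in> sets lebesgue \<and> symmetric_set C}"
    using assms(1) by (intro bdd_aboveI[of _ "measure lebesgue A"]) (auto intro: measure_mono_fmeasurable)
  then show ?thesis
    unfolding D_def using assms(2-4) by (intro cSup_upper) auto
qed

lemma D_nonneg: "A \<in> fmeasurable lebesgue \<Longrightarrow> 0 \<le> D A"
  using D_ge_measure[of A "{}"] symmetric_set_empty by simp

lemma D_le_measure: "A \<in> fmeasurable lebesgue \<Longrightarrow> D A \<le> measure lebesgue A"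
  by (intro D_leI measure_mono_fmeasurable) auto

lemma D_scale_image_le:
  fixes t :: real
  assumes "0 < t" "A \<in> fmeasurable lebesgue"
  shows "D ((*) t ` A) \<le> t * D A"
proof (rule D_leI)
  fix C assume C: "C \<subseteq> (*) t ` A" "C \<in> sets lebesgue" "symmetric_set C"
  let ?C = "(*) (1 / t) ` C"
  have "?C \<subseteq> A" using C(1) assms(1) by auto
  moreover have "?C \<in> sets lebesgue"
    using sets_lebesgue_scaleR_image[of "1 / t" C] C(2) assms(1) by simp
  moreover have "symmetric_set ?C"
    using symmetric_set_scale_image[of "1 / t" C] C(3) assms(1) by simp
  ultimately have "measure lebesgue ?C \<le> D A"
    using D_ge_measure[OF assms(2)] by blast
  moreover have "measure lebesgue C = t * measure lebesgue ?C"
    using measure_lebesgue_scaleR_image[of "1 / t" C] assms(1) by simp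
  ultimately show "measure lebesgue C \<le> t * D A"
    using assms(1) by (simp add: mult_left_mono)
qed

lemma fmeasurable_if_subset_unit_interval:
  "A \<subseteq> {0..<1::real} \<Longrightarrow> A \<in> sets lebesgue \<Longrightarrow> A \<in> fmeasurable lebesgue"
  by (rule fmeasurableI2[of "{0..1}"]) auto

lemma Delta_le_D:
  assumes "A \<subseteq> {0..<1}" "A \<in> sets lebesgue" "measure lebesgue A = \<epsilon>"
  shows "Delta \<epsilon> \<le> D A"
  unfolding Delta_def using assms
  by (intro cInf_lower bdd_belowI[of _ 0])
     (auto intro: D_nonneg fmeasurable_if_subset_unit_interval)

lemma Delta_greatest:
  assumes "0 \<le> x" "x \<le> 1"
    and "\<And>A. A \<subseteq> {0..<1} \<Longrightarrow> A \<in> sets lebesgue \<Longrightarrow> measure lebesgue A = x \<Longrightarrow> b \<le> D A"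
  shows "b \<le> Delta x"
  unfolding Delta_def
proof (rule cInf_greatest)
  have "{0..<x} \<subseteq> {0..<1}" "{0..<x} \<in> sets lebesgue" "measure lebesgue {0..<x} = x"
    using assms(1,2) by auto
  then show "{D A | A. A \<subseteq> {0..<1} \<and> A \<in> sets lebesgue \<and> measure lebesgue A = x} \<noteq> {}"
    by blast
qed (use assms(3) in blast)

lemma Delta_le_scaled:
  fixes \<epsilon> x :: real
  assumes "0 < \<epsilon>" "\<epsilon> \<le> x" "x \<le> 1"
  shows "Delta \<epsilon> \<le> Delta x / x * \<epsilon>"
proof -
  define t where "t = \<epsilon> / x"
  have t: "0 < t" "t \<le> 1" using assms by (auto simp: t_def)
  have "Delta \<epsilon> / t \<le> Delta x"
  proof (rule Delta_greatest)
    fix A :: "real set" assume A: "A \<subseteq> {0..<1}" "A \<in> sets lebesgue" "measure lebesgue A = x"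
    have "(*) t ` A \<subseteq> {0..<1}"
    proof (rule image_subsetI)
      fix y assume "y \<in> A"
      then have "0 \<le> y" "y < 1" using A(1) by auto
      then show "t * y \<in> {0..<1}"
        using t mult_left_le_one_le[of y t] by auto
    qed
    moreover have "(*) t ` A \<in> sets lebesgue"
      using sets_lebesgue_scaleR_image[of t A] A(2) t by simp
    moreover have "measure lebesgue ((*) t ` A) = \<epsilon>"
      using measure_lebesgue_scaleR_image[of t A] A(3) t assms by (simp add: t_def)
    ultimately have "Delta \<epsilon> \<le> D ((*) t ` A)" by (rule Delta_le_D)
    also have "\<dots> \<le> t * D A"
      using D_scale_image_le[OF t(1) fmeasurable_if_subset_unit_interval[OF A(1,2)]] .
    finally show "Delta \<epsilon> / t \<le> D A" using t by (simp add: field_simps)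
  qed (use assms in auto)
  then have "Delta \<epsilon> \<le> t * Delta x"
    using mult_left_mono[of "Delta \<epsilon> / t" "Delta x" t] t by simp
  then show ?thesis by (simp add: t_def mult.commute)
qed

theorem lemma2p3:
  shows "(\<forall>\<epsilon> x::real. 0 \<le> \<epsilon> \<and> \<epsilon> \<le> x \<and> x \<le> 1 \<and> 0 < x \<longrightarrow> Delta \<epsilon> \<le> Delta x / x * \<epsilon>)
         \<and> (\<forall>\<epsilon>::real. 0 \<le> \<epsilon> \<and> \<epsilon> \<le> 1 \<longrightarrow> Delta \<epsilon> \<le> \<epsilon>)"
proof -
  have Delta_0: "Delta 0 \<le> 0"
    using Delta_le_D[of "{}" 0] D_le_measure[of "{}"] by simp
  have scaled: "Delta \<epsilon> \<le> Delta x / x * \<epsilon>" if "0 \<le> \<epsilon>" "\<epsilon> \<le> x" "x \<le> 1" "0 < x" for \<epsilon> x :: real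
    using that Delta_0 Delta_le_scaled[of \<epsilon> x] by (cases "\<epsilon> = 0") auto
  have "Delta 1 \<le> 1"
    using Delta_le_D[of "{0..<1}" 1] D_le_measure[of "{0..<1::real}"]
      fmeasurable_if_subset_unit_interval[of "{0..<1}"] by simp
  then have "Delta \<epsilon> \<le> \<epsilon>" if "0 \<le> \<epsilon>" "\<epsilon> \<le> 1" for \<epsilon> :: real
    using scaled[of \<epsilon> 1] that mult_right_mono[of "Delta 1" 1 \<epsilon>] by simp
  with scaled show ?thesis by blast
qed

end
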